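(* There is a universal constant $c>0$ such that: for any even integer $n\ge 2$, any integer $k\ge1$, and any reals $G,\lambda>0$ with $G\ge 2\lambda$, there exist functions $f_1,\dots,f_n$ on $\mathbb{R}$ and an initialization $x_0$ satisfying Assumption (A) with parameters $n,\lambda,G$, such that for every step size $\eta>0$, SGD with random reshuffling satisfies \[ \mathbb{E}\Big[F(x_k)-\inf_xF(x)\Big]\;\ge\;c\cdot\min\left\{\lambda,\ \frac{G^2}{\lambda nk^3}\right\}. \]
   Context: Assumption (A) (parameters $n\ge 2$, $\lambda>0$, $G>0$, on $\mathbb{R}^d$): $F(x)=\frac1n\sum_{i=1}^n f_i(x)$, where each $f_i:\mathbb{R}^d\to\mathbb{R}$ is a convex quadratic function $f_i(x)=x^\top A_ix+b_i^\top x$ (with $A_i$ symmetric positive semidefinite); $F$ is $\lambda$-strongly convex with unique minimizer $x^*$; each $\nabla f_i$ is $L$-Lipschitz for some $L\le 3\lambda$; each $f_i$ satisfies $\|\nabla f_i(x)\|\le G$ for all $x$ with $\|x-x^*\|\le 1$; and the initialization satisfies $\|x_0-x^*\|\le 1$. SGD with random reshuffling with constant step size $\eta$: for each of $k$ epochs, a fresh uniformly random permutation $\pi$ of $\{1,\dots,n\}$ (independent across epochs) is drawn and the updates $x\leftarrow x-\eta\nabla f_{\pi(j)}(x)$, $j=1,\dots,n$, are performed; $x_t$ is the iterate at the end of epoch $t$. *)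

theory Defs
  imports "HOL-Analysis.Analysis" "HOL-Probability.Probability"
begin

definition strongly_convex_on :: "real \<Rightarrow> real set \<Rightarrow> (real \<Rightarrow> real) \<Rightarrow> bool" where
  "strongly_convex_on \<mu> S F \<longleftrightarrow>
     (\<forall>x\<in>S. \<forall>y\<in>S. \<forall>t::real. 0 \<le> t \<and> t \<le> 1 \<longrightarrow>
        F (t * x + (1 - t) * y) \<le> t * F x + (1 - t) * F y - \<mu> / 2 * t * (1 - t) * (x - y)^2)"

definition avgF :: "nat \<Rightarrow> (nat \<Rightarrow> real \<Rightarrow> real) \<Rightarrow> real \<Rightarrow> real" where
  "avgF n f x = (1 / real n) * (\<Sum>i=1..n. f i x)"

definition minimizer :: "(real \<Rightarrow> real) \<Rightarrow> real" where
  "minimizer F = (THE xs. \<forall>y. F xs \<le> F y)"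

definition assumptionA :: "nat \<Rightarrow> real \<Rightarrow> real \<Rightarrow> (nat \<Rightarrow> real \<Rightarrow> real) \<Rightarrow> real \<Rightarrow> bool" where
  "assumptionA n lam G f x0 \<longleftrightarrow>
     n \<ge> 2 \<and> lam > 0 \<and> G > 0 \<and>
     (\<forall>i\<in>{1..n}. \<exists>a b::real. a \<ge> 0 \<and> (\<forall>x. f i x = a * x^2 + b * x)) \<and>
     strongly_convex_on lam UNIV (avgF n f) \<and>
     (\<exists>!xs. \<forall>y. avgF n f xs \<le> avgF n f y) \<and>
     (\<exists>L. L \<le> 3 * lam \<and> (\<forall>i\<in>{1..n}. L-lipschitz_on UNIV (deriv (f i)))) \<and>
     (\<forall>i\<in>{1..n}. \<forall>x. \<bar>x - minimizer (avgF n f)\<bar> \<le> 1 \<longrightarrow> \<bar>deriv (f i) x\<bar> \<le> G) \<and>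
     \<bar>x0 - minimizer (avgF n f)\<bar> \<le> 1"

definition rr_epoch :: "(nat \<Rightarrow> real \<Rightarrow> real) \<Rightarrow> nat \<Rightarrow> real \<Rightarrow> (nat \<Rightarrow> nat) \<Rightarrow> real \<Rightarrow> real" where
  "rr_epoch f n \<eta> \<sigma> x = fold (\<lambda>j y. y - \<eta> * deriv (f (\<sigma> j)) y) [1..<n+1] x"

primrec rr_iter :: "(nat \<Rightarrow> real \<Rightarrow> real) \<Rightarrow> nat \<Rightarrow> real \<Rightarrow> real \<Rightarrow> nat \<Rightarrow> real pmf" where
  "rr_iter f n \<eta> x0 0 = return_pmf x0"
| "rr_iter f n \<eta> x0 (Suc t) =
     bind_pmf (rr_iter f n \<eta> x0 t)
       (\<lambda>x. map_pmf (\<lambda>\<sigma>. rr_epoch f n \<eta> \<sigma> x) (pmf_of_set {\<sigma>. \<sigma> permutes {1..n}}))"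

end

theory Submission
  imports Defs
begin

text \<open>
  Take \<open>f\<^sub>i(x) = \<lambda>x\<^sup>2/2 + (-1)\<^sup>i G x / 2\<close>: for even \<open>n\<close> the linear terms cancel, so
  \<open>F(x) = \<lambda>x\<^sup>2/2\<close>, and one epoch maps \<open>x\<close> to
  \<open>q\<^sup>n x - \<eta> G/2 \<Sum>\<^sub>j q\<^bsup>n-j\<^esup> (-1)\<^bsup>\<sigma> j\<^esup>\<close> with \<open>q = 1 - \<eta>\<lambda>\<close>. The noise term has mean zero, and by
  the variance formula for sampling without replacement its second moment is
  \<open>(\<eta>G/2)\<^sup>2 n/(n-1)\<close> times the sum of squared deviations of the weights \<open>q\<^bsup>n-j\<^esup>\<close>; hence
  \<open>E x\<^sub>k\<^sup>2 = r\<^sup>k + (noise) \<Sum>\<^sub>t\<^sub><\<^sub>k r\<^sup>t\<close> with \<open>r = q\<^bsup>2n\<^esup>\<close>. Cauchy-Schwarz against two centred test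
  vectors bounds the deviation sum from below. Finally, either the step is large, or the
  horizon is too short for the contraction \<open>r\<^sup>k\<close> to act, or the noise accumulated over
  \<open>k\<close> epochs is of order \<open>G\<^sup>2/(\<lambda>\<^sup>2 n k\<^sup>3)\<close>.
\<close>

section \<open>Sums over permutations\<close>

lemma sum_permutes_apply_eq:
  assumes "i \<in> S" "j \<in> S"
  shows "(\<Sum>\<sigma> | \<sigma> permutes S. h (\<sigma> i)) = (\<Sum>\<sigma> | \<sigma> permutes S. h (\<sigma> j))"
proof -
  have "Transposition.transpose i j permutes S"
    using assms by (rule permutes_swap_id)
  from sum_permutations_compose_right[OF this, of "\<lambda>\<sigma>. h (\<sigma> i)"] show ?thesis
    by simp
qed

lemma sum_permutes_apply2_eq:
  assumes "i \<in> S" "i' \<in> S" "i \<noteq> i'" "j \<in> S" "j' \<in> S" "j \<noteq> j'"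
  shows "(\<Sum>\<sigma> | \<sigma> permutes S. h (\<sigma> i) (\<sigma> i')) = (\<Sum>\<sigma> | \<sigma> permutes S. h (\<sigma> j) (\<sigma> j'))"
proof -
  define z where "z = Transposition.transpose j i i'"
  define \<tau> where "\<tau> = Transposition.transpose j' z \<circ> Transposition.transpose j i"
  have z: "z \<in> S" "z \<noteq> j"
    using assms by (auto simp: z_def Transposition.transpose_def)
  have "\<tau> permutes S"
    unfolding \<tau>_def using assms z by (intro permutes_compose permutes_swap_id) auto
  moreover have "\<tau> i = j" "\<tau> i' = j'"
    using assms z by (auto simp: \<tau>_def z_def Transposition.transpose_def)
  ultimately show ?thesis
    using sum_permutations_compose_right[of \<tau> S "\<lambda>\<sigma>. h (\<sigma> i) (\<sigma> i')"] by simp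
qed

lemma sum_permutes_apply:
  assumes "finite S" "j \<in> S"
  shows "real (card S) * (\<Sum>\<sigma> | \<sigma> permutes S. h (\<sigma> j))
    = real (card {\<sigma>. \<sigma> permutes S}) * (\<Sum>i\<in>S. h i)"
proof -
  have "real (card S) * (\<Sum>\<sigma> | \<sigma> permutes S. h (\<sigma> j)) = (\<Sum>j'\<in>S. \<Sum>\<sigma> | \<sigma> permutes S. h (\<sigma> j'))"
    using sum_permutes_apply_eq[OF _ assms(2), of _ h] by simp
  also have "\<dots> = (\<Sum>\<sigma> | \<sigma> permutes S. \<Sum>j'\<in>S. h (\<sigma> j'))"
    by (rule sum.swap)
  also have "\<dots> = (\<Sum>\<sigma> | \<sigma> permutes S. \<Sum>i\<in>S. h i)"
    by (rule sum.cong[OF refl]) (use sum.permute[of _ S h] in \<open>simp add: comp_def\<close>)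
  finally show ?thesis by simp
qed

lemma sum_permutes_weighted_sum:
  fixes c w :: "'a \<Rightarrow> real"
  assumes "finite S" "(\<Sum>i\<in>S. c i) = 0"
  shows "(\<Sum>\<sigma> | \<sigma> permutes S. \<Sum>j\<in>S. w j * c (\<sigma> j)) = 0"
proof -
  have "(\<Sum>\<sigma> | \<sigma> permutes S. c (\<sigma> j)) = 0" if "j \<in> S" for j
    using sum_permutes_apply[OF assms(1) that, of c] assms that by auto
  then show ?thesis
    by (subst sum.swap) (simp add: sum_distrib_left[symmetric])
qed

definition sum_sq_dev :: "'a set \<Rightarrow> ('a \<Rightarrow> real) \<Rightarrow> real" where
  "sum_sq_dev S w = (\<Sum>j\<in>S. (w j - (\<Sum>i\<in>S. w i) / card S)\<^sup>2)"

lemma sum_sq_dev_nonneg: "sum_sq_dev S w \<ge> 0"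
  unfolding sum_sq_dev_def by (simp add: sum_nonneg)

lemma sum_sq_dev_eq:
  assumes "finite S"
  shows "sum_sq_dev S w = (\<Sum>j\<in>S. (w j)\<^sup>2) - (\<Sum>j\<in>S. w j)\<^sup>2 / card S"
proof (cases "S = {}")
  case False
  define m where "m = (\<Sum>i\<in>S. w i) / card S"
  have "card S > 0" using False assms by (simp add: card_gt_0_iff)
  moreover have "sum_sq_dev S w = (\<Sum>j\<in>S. (w j)\<^sup>2) - 2 * m * (\<Sum>j\<in>S. w j) + card S * m\<^sup>2"
    unfolding sum_sq_dev_def m_def[symmetric]
    by (simp add: power2_diff sum.distrib sum_subtractf sum_distrib_left[symmetric]
        sum_distrib_right[symmetric])
  ultimately show ?thesis
    by (simp add: m_def field_simps power2_eq_square)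
qed (simp add: sum_sq_dev_def)

lemma centered_Cauchy_Schwarz:
  assumes "(\<Sum>j\<in>S. v j) = 0"
  shows "(\<Sum>j\<in>S. w j * v j)\<^sup>2 \<le> sum_sq_dev S w * (\<Sum>j\<in>S. (v j)\<^sup>2)"
proof -
  define m where "m = (\<Sum>i\<in>S. w i) / card S"
  have "(\<Sum>j\<in>S. w j * v j) = (\<Sum>j\<in>S. (w j - m) * v j)"
    using assms by (simp add: left_diff_distrib sum_subtractf sum_distrib_left[symmetric])
  then show ?thesis
    using Cauchy_Schwarz_ineq_sum[of "\<lambda>j. w j - m" v S] by (simp add: sum_sq_dev_def m_def)
qed

lemma sum_permutes_quadratic_form:
  fixes c v :: "'a \<Rightarrow> real"
  assumes "finite S" "a \<in> S" "b \<in> S" "a \<noteq> b"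
  defines "A \<equiv> \<Sum>\<sigma> | \<sigma> permutes S. c (\<sigma> a) * c (\<sigma> a)"
    and "B \<equiv> \<Sum>\<sigma> | \<sigma> permutes S. c (\<sigma> a) * c (\<sigma> b)"
  shows "(\<Sum>\<sigma> | \<sigma> permutes S. (\<Sum>j\<in>S. v j * c (\<sigma> j))\<^sup>2)
    = B * (\<Sum>j\<in>S. v j)\<^sup>2 + (A - B) * (\<Sum>j\<in>S. (v j)\<^sup>2)"
proof -
  have pair: "(\<Sum>\<sigma> | \<sigma> permutes S. c (\<sigma> j) * c (\<sigma> j')) = (if j = j' then A else B)"
    if "j \<in> S" "j' \<in> S" for j j'
    using that assms sum_permutes_apply_eq[of j S a "\<lambda>x. c x * c x"]
      sum_permutes_apply2_eq[of a S b j j' "\<lambda>x y. c x * c y"]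
    by auto
  have "(\<Sum>\<sigma> | \<sigma> permutes S. (\<Sum>j\<in>S. v j * c (\<sigma> j))\<^sup>2)
      = (\<Sum>\<sigma> | \<sigma> permutes S. \<Sum>j\<in>S. \<Sum>j'\<in>S. v j * v j' * (c (\<sigma> j) * c (\<sigma> j')))"
    unfolding power2_eq_square sum_product by (simp add: mult_ac)
  also have "\<dots> = (\<Sum>j\<in>S. \<Sum>j'\<in>S. \<Sum>\<sigma> | \<sigma> permutes S. v j * v j' * (c (\<sigma> j) * c (\<sigma> j')))"
    by (subst sum.swap, rule sum.cong[OF refl], rule sum.swap)
  also have "\<dots> = (\<Sum>j\<in>S. \<Sum>j'\<in>S. B * (v j * v j') + (if j = j' then (A - B) * (v j)\<^sup>2 else 0))"
    by (intro sum.cong refl) (simp add: pair power2_eq_square algebra_simps flip: sum_distrib_left)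
  also have "\<dots> = B * (\<Sum>j\<in>S. v j)\<^sup>2 + (A - B) * (\<Sum>j\<in>S. (v j)\<^sup>2)"
    using assms(1) by (simp add: sum.distrib power2_eq_square sum_product flip: sum_distrib_left)
  finally show ?thesis .
qed

text \<open>The variance of a weighted sum under sampling without replacement.\<close>

lemma sum_permutes_weighted_sum_square:
  fixes c w :: "'a \<Rightarrow> real"
  assumes S: "finite S" "card S \<ge> 2" and c: "(\<Sum>i\<in>S. c i) = 0"
  shows "(\<Sum>\<sigma> | \<sigma> permutes S. (\<Sum>j\<in>S. w j * c (\<sigma> j))\<^sup>2)
    = real (card {\<sigma>. \<sigma> permutes S}) * (\<Sum>i\<in>S. (c i)\<^sup>2) / (real (card S) - 1) * sum_sq_dev S w"
proof -
  obtain a b where ab: "a \<in> S" "b \<in> S" "a \<noteq> b"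
    using S by (metis One_nat_def card_le_Suc0_iff_eq not_less_eq_eq numeral_2_eq_2)
  define A where "A = (\<Sum>\<sigma> | \<sigma> permutes S. c (\<sigma> a) * c (\<sigma> a))"
  define B where "B = (\<Sum>\<sigma> | \<sigma> permutes S. c (\<sigma> a) * c (\<sigma> b))"
  define n where "n = real (card S)"
  note expand = sum_permutes_quadratic_form[OF S(1) ab, where c=c, folded A_def B_def]
  have n: "n \<ge> 2" using S by (simp add: n_def)
  \<comment> \<open>The weights \<open>v = 1\<close> give zero, because every \<open>\<sigma>\<close> just reorders \<open>c\<close>.\<close>
  have "(\<Sum>\<sigma> | \<sigma> permutes S. (\<Sum>j\<in>S. 1 * c (\<sigma> j))\<^sup>2) = 0"
    using c sum.permute[of _ S c] by (intro sum.neutral) (simp add: comp_def)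
  then have "B * n\<^sup>2 + (A - B) * n = 0"
    using expand[of "\<lambda>_. 1"] by (simp add: n_def)
  moreover have "A + B * (n - 1) = (B * n\<^sup>2 + (A - B) * n) / n"
    using n by (simp add: field_simps power2_eq_square)
  ultimately have B: "B = - A / (n - 1)"
    using n by (simp add: field_simps)
  have A: "n * A = real (card {\<sigma>. \<sigma> permutes S}) * (\<Sum>i\<in>S. (c i)\<^sup>2)"
    using sum_permutes_apply[OF S(1) ab(1), of "\<lambda>x. c x * c x"]
    by (simp add: A_def n_def power2_eq_square)
  have "A - B = n * A / (n - 1)"
    unfolding B using n by (simp add: field_simps)
  moreover have "n * A / (n - 1) * (s / n) = - B * s" for s
    unfolding B using n by simp
  ultimately have "B * (\<Sum>j\<in>S. w j)\<^sup>2 + (A - B) * (\<Sum>j\<in>S. (w j)\<^sup>2)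
      = n * A / (n - 1) * ((\<Sum>j\<in>S. (w j)\<^sup>2) - (\<Sum>j\<in>S. w j)\<^sup>2 / n)"
    by (simp add: right_diff_distrib)
  with A show ?thesis
    unfolding expand sum_sq_dev_eq[OF S(1)] n_def by simp
qed

section \<open>Random reshuffling\<close>

lemma fold_affine_gradient_steps:
  "fold (\<lambda>j y. y - \<eta> * (lam * y + c j)) [1..<m+1] (x::real)
     = (1 - \<eta> * lam)^m * x - \<eta> * (\<Sum>j=1..m. (1 - \<eta> * lam)^(m-j) * c j)"
proof (induction m)
  case (Suc m)
  let ?step = "\<lambda>j y. y - \<eta> * (lam * y + c j)" and ?q = "1 - \<eta> * lam"
  have shift: "?q * (\<Sum>j=1..m. ?q^(m-j) * c j) = (\<Sum>j=1..m. ?q^(Suc m-j) * c j)"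
    unfolding sum_distrib_left by (rule sum.cong) (auto simp: Suc_diff_le)
  have "[1..<Suc m + 1] = [1..<m+1] @ [m+1]"
    by simp
  then have "fold ?step [1..<Suc m + 1] x = ?step (m+1) (fold ?step [1..<m+1] x)"
    by (simp del: upt_Suc)
  also have "\<dots> = ?q * (?q^m * x - \<eta> * (\<Sum>j=1..m. ?q^(m-j) * c j)) - \<eta> * c (m+1)"
    unfolding Suc.IH by (simp add: algebra_simps)
  also have "\<dots> = ?q^Suc m * x - \<eta> * (?q * (\<Sum>j=1..m. ?q^(m-j) * c j) + c (m+1))"
    by (simp add: algebra_simps)
  also have "\<dots> = ?q^Suc m * x - \<eta> * (\<Sum>j=1..Suc m. ?q^(Suc m-j) * c j)"
    unfolding shift by (simp add: sum.cl_ivl_Suc)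
  finally show ?case
    by simp
qed simp

lemma permutations_atLeastAtMost_finite_nonempty:
  "finite {\<sigma>. \<sigma> permutes {1..n::nat}}" "{\<sigma>. \<sigma> permutes {1..n::nat}} \<noteq> {}"
  using finite_permutations permutes_id by blast+

lemma finite_set_pmf_rr_iter: "finite (set_pmf (rr_iter f n \<eta> z t))"
  using permutations_atLeastAtMost_finite_nonempty[of n] by (induction t) auto

lemma expectation_rr_iter_square:
  assumes epoch: "\<And>x. measure_pmf.expectation (pmf_of_set {\<sigma>. \<sigma> permutes {1..n}})
      (\<lambda>\<sigma>. (rr_epoch f n \<eta> \<sigma> x)\<^sup>2) = Q * x\<^sup>2 + C"
  shows "measure_pmf.expectation (rr_iter f n \<eta> z k) (\<lambda>x. x\<^sup>2) = Q^k * z\<^sup>2 + C * (\<Sum>t<k. Q^t)"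
proof (induction k)
  case (Suc k)
  define p where "p = rr_iter f n \<eta> z k"
  have fin: "finite (set_pmf p)"
    unfolding p_def by (rule finite_set_pmf_rr_iter)
  have "measure_pmf.expectation (rr_iter f n \<eta> z (Suc k)) (\<lambda>x. x\<^sup>2)
      = (\<Sum>a\<in>set_pmf p. pmf p a * (Q * a\<^sup>2 + C))"
    unfolding rr_iter.simps p_def[symmetric]
    by (subst pmf_expectation_bind[OF fin]) (use permutations_atLeastAtMost_finite_nonempty epoch in auto)
  also have "\<dots> = Q * (\<Sum>a\<in>set_pmf p. a\<^sup>2 * pmf p a) + C * (\<Sum>a\<in>set_pmf p. pmf p a)"
    by (simp add: sum.distrib sum_distrib_left algebra_simps)
  also have "\<dots> = Q * measure_pmf.expectation p (\<lambda>x. x\<^sup>2) + C"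
    using fin by (simp add: integral_measure_pmf_real sum_pmf_eq_1)
  moreover have "(\<Sum>t<Suc k. Q^t) = 1 + Q * (\<Sum>t<k. Q^t)"
    unfolding sum.lessThan_Suc_shift by (simp add: sum_distrib_left)
  ultimately show ?case
    using Suc by (simp add: p_def algebra_simps)
qed simp

section \<open>The hard instance\<close>

definition alternating_instance :: "real \<Rightarrow> real \<Rightarrow> nat \<Rightarrow> real \<Rightarrow> real" where
  "alternating_instance lam G i x = lam / 2 * x\<^sup>2 + G / 2 * (-1)^i * x"

lemma sum_neg_one_power_even:
  assumes "even n"
  shows "(\<Sum>i=1..n. (-1::real)^i) = 0"
proof -
  obtain p where "n = 2 * p" using assms by blast
  moreover have "(\<Sum>i=1..2*p. (-1::real)^i) = 0"
    by (induction p) (simp_all add: sum.cl_ivl_Suc)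
  ultimately show ?thesis by simp
qed

lemma deriv_alternating_instance:
  "deriv (alternating_instance lam G i) = (\<lambda>y. lam * y + G / 2 * (-1)^i)"
proof
  fix y
  have "(alternating_instance lam G i has_real_derivative lam * y + G / 2 * (-1)^i) (at y)"
    unfolding alternating_instance_def by (auto intro!: derivative_eq_intros)
  then show "deriv (alternating_instance lam G i) y = lam * y + G / 2 * (-1)^i"
    by (rule DERIV_imp_deriv)
qed

lemma avgF_alternating_instance:
  assumes "even n" "n > 0"
  shows "avgF n (alternating_instance lam G) = (\<lambda>x. lam / 2 * x\<^sup>2)"
proof
  fix x
  have "(\<Sum>i=1..n. alternating_instance lam G i x) = real n * (lam / 2 * x\<^sup>2) + G / 2 * x * (\<Sum>i=1..n. (-1)^i)"
    unfolding alternating_instance_def by (simp add: sum.distrib sum_distrib_left algebra_simps)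
  then show "avgF n (alternating_instance lam G) x = lam / 2 * x\<^sup>2"
    using assms sum_neg_one_power_even[OF assms(1)] by (simp add: avgF_def)
qed

lemma minimizer_half_square:
  assumes "lam > 0"
  shows "minimizer (\<lambda>x::real. lam / 2 * x\<^sup>2) = 0" "(INF x. lam / 2 * (x::real)\<^sup>2) = 0"
  using assms unfolding minimizer_def
  by (auto intro!: the_equality cInf_eq_minimum simp: not_le intro: order.antisym dest: spec[of _ 0])

lemma assumptionA_alternating_instance:
  assumes "even n" "n \<ge> 2" "lam > 0" "G \<ge> 2 * lam"
  shows "assumptionA n lam G (alternating_instance lam G) 1"
proof -
  let ?f = "alternating_instance lam G"
  have F: "avgF n ?f = (\<lambda>x. lam / 2 * x\<^sup>2)"
    using assms by (simp add: avgF_alternating_instance)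
  have "lam / 2 * (t * x + (1 - t) * y)\<^sup>2
      = t * (lam / 2 * x\<^sup>2) + (1 - t) * (lam / 2 * y\<^sup>2) - lam / 2 * t * (1 - t) * (x - y)\<^sup>2" for t x y :: real
    by (simp add: power2_eq_square field_simps)
  then have "strongly_convex_on lam UNIV (avgF n ?f)"
    unfolding F strongly_convex_on_def by simp
  moreover have "\<exists>!xs. \<forall>y. avgF n ?f xs \<le> avgF n ?f y"
    unfolding F by (rule ex1I[of _ 0]) (use assms in \<open>auto dest: spec[of _ 0]\<close>)
  moreover have "lam-lipschitz_on UNIV (deriv (?f i))" for i
    unfolding deriv_alternating_instance using assms
    by (intro lipschitz_onI) (auto simp: dist_real_def abs_mult right_diff_distrib[symmetric])
  moreover have "\<bar>deriv (?f i) x\<bar> \<le> G" if "\<bar>x\<bar> \<le> 1" for i x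
  proof -
    have "\<bar>lam * x\<bar> \<le> lam" using that assms by (simp add: abs_mult)
    moreover have "\<bar>G / 2 * (-1)^i\<bar> = G / 2" using assms by (simp add: abs_mult)
    ultimately show ?thesis
      unfolding deriv_alternating_instance using assms abs_triangle_ineq[of "lam * x"] by linarith
  qed
  moreover have "\<exists>a b. a \<ge> 0 \<and> (\<forall>x. ?f i x = a * x\<^sup>2 + b * x)" for i
    using assms by (intro exI[of _ "lam / 2"] exI[of _ "G / 2 * (-1)^i"]) (simp add: alternating_instance_def)
  ultimately show ?thesis
    using assms unfolding assumptionA_def F minimizer_half_square(1)[OF assms(3)]
    by (auto intro!: exI[of _ lam])
qed

lemma rr_epoch_alternating_instance:
  "rr_epoch (alternating_instance lam G) n \<eta> \<sigma> x
     = (1 - \<eta> * lam)^n * x - \<eta> * G / 2 * (\<Sum>j=1..n. (1 - \<eta> * lam)^(n-j) * (-1)^(\<sigma> j))"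
  unfolding rr_epoch_def deriv_alternating_instance
  using fold_affine_gradient_steps[of \<eta> lam "\<lambda>j. G / 2 * (-1)^(\<sigma> j)" n x]
  by (simp add: sum_distrib_left mult_ac)

lemma expectation_rr_epoch_square_alternating_instance:
  assumes "even n" "n \<ge> 2"
  shows "measure_pmf.expectation (pmf_of_set {\<sigma>. \<sigma> permutes {1..n}})
      (\<lambda>\<sigma>. (rr_epoch (alternating_instance lam G) n \<eta> \<sigma> x)\<^sup>2)
    = ((1 - \<eta> * lam)^n)\<^sup>2 * x\<^sup>2
      + \<eta>\<^sup>2 * G\<^sup>2 / 4 * (real n / (real n - 1)) * sum_sq_dev {1..n} (\<lambda>j. (1 - \<eta> * lam)^(n-j))"
proof -
  define P where "P = {\<sigma>. \<sigma> permutes {1..n}}"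
  define N where "N = real (card P)"
  define T where "T \<sigma> = (\<Sum>j=1..n. (1 - \<eta> * lam)^(n-j) * (-1::real)^(\<sigma> j))" for \<sigma> :: "nat \<Rightarrow> nat"
  have P: "finite P" "P \<noteq> {}"
    unfolding P_def by (rule permutations_atLeastAtMost_finite_nonempty)+
  then have N: "N > 0"
    by (simp add: N_def card_gt_0_iff)
  have signs: "(\<Sum>i=1..n. (-1::real)^i) = 0" "(\<Sum>i=1..n. ((-1::real)^i)\<^sup>2) = real n"
    using sum_neg_one_power_even[OF assms(1)] by (simp_all add: power_even_eq flip: power_mult)
  have mean: "(\<Sum>\<sigma>\<in>P. T \<sigma>) = 0"
    unfolding P_def T_def by (rule sum_permutes_weighted_sum) (use signs in auto)
  have var: "(\<Sum>\<sigma>\<in>P. (T \<sigma>)\<^sup>2) = N * (real n / (real n - 1)) * sum_sq_dev {1..n} (\<lambda>j. (1 - \<eta> * lam)^(n-j))"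
    unfolding P_def T_def N_def
    using sum_permutes_weighted_sum_square[of "{1..n}" "\<lambda>i. (-1::real)^i"] assms signs
    by simp
  have expand: "(\<Sum>\<sigma>\<in>P. (a - b * T \<sigma>)\<^sup>2) = N * a\<^sup>2 - 2 * a * b * (\<Sum>\<sigma>\<in>P. T \<sigma>) + b\<^sup>2 * (\<Sum>\<sigma>\<in>P. (T \<sigma>)\<^sup>2)"
    for a b
    unfolding power2_diff N_def
    by (simp add: sum.distrib sum_subtractf power_mult_distrib flip: sum_distrib_left sum_distrib_right)
  have "measure_pmf.expectation (pmf_of_set P) (\<lambda>\<sigma>. (rr_epoch (alternating_instance lam G) n \<eta> \<sigma> x)\<^sup>2)
      = (\<Sum>\<sigma>\<in>P. ((1 - \<eta> * lam)^n * x - \<eta> * G / 2 * T \<sigma>)\<^sup>2) / N"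
    unfolding rr_epoch_alternating_instance T_def N_def by (rule integral_pmf_of_set[OF P(2,1)])
  then show ?thesis
    unfolding P_def[symmetric] expand mean var using N
    by (simp add: power_mult_distrib power_divide add_divide_distrib)
qed

text \<open>The test vector \<open>u\<close> is indexed backwards from the end of the epoch, \<open>m = n - j\<close>.\<close>

lemma sum_sq_dev_geometric_test:
  fixes u :: "nat \<Rightarrow> real"
  assumes "(\<Sum>m<n. u m) = 0"
  shows "(\<Sum>m<n. q^m * u m)\<^sup>2 \<le> sum_sq_dev {1..n} (\<lambda>j. q^(n-j)) * (\<Sum>m<n. (u m)\<^sup>2)"
proof -
  have rev: "(\<Sum>j=1..n. g (n - j)) = (\<Sum>m<n. g m)" for g :: "nat \<Rightarrow> real"
    using sum.atLeastLessThan_rev_at_least_Suc_atMost[of g 0 n] by (simp add: atLeast0LessThan)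
  show ?thesis
    using centered_Cauchy_Schwarz[where S="{1..n}" and v="\<lambda>j. u (n - j)" and w="\<lambda>j. q^(n-j)"] assms
    unfolding rev[of u] rev[of "\<lambda>m. q^m * u m"] rev[of "\<lambda>m. (u m)\<^sup>2"] by simp
qed

lemma sum_sq_dev_geometric_ge_last_step:
  assumes "n \<ge> 2"
  shows "(1 - q)\<^sup>2 \<le> 2 * sum_sq_dev {1..n} (\<lambda>j. q^(n-j))"
proof -
  define u :: "nat \<Rightarrow> real" where "u m = (if m = 0 then 1 else if m = 1 then -1 else 0)" for m
  obtain k where n: "n = Suc (Suc k)"
    using assms by (metis add_2_eq_Suc le_Suc_ex)
  have "(\<Sum>m<n. u m) = 0" "(\<Sum>m<n. (u m)\<^sup>2) = 2" "(\<Sum>m<n. q^m * u m) = 1 - q"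
    unfolding n by (simp_all add: sum.lessThan_Suc_shift u_def del: sum.lessThan_Suc)
  then show ?thesis
    using sum_sq_dev_geometric_test[where n=n and u=u and q=q] by (simp add: mult.commute)
qed

lemma sum_sq_dev_geometric_ge_halves:
  assumes "n = 2 * p"
  shows "(1 - q^p)^4 \<le> real n * (1 - q)\<^sup>2 * sum_sq_dev {1..n} (\<lambda>j. q^(n-j))"
proof -
  define u :: "nat \<Rightarrow> real" where "u m = (if m < p then 1 else -1)" for m
  have split: "(\<Sum>m<n. g m) = (\<Sum>m<p. g m) + (\<Sum>m<p. g (m + p))" for g :: "nat \<Rightarrow> real"
    using sum.atLeastLessThan_concat[of 0 p n g] sum.shift_bounds_nat_ivl[of g 0 p p] assms
    by (simp add: atLeast0LessThan mult_2)
  have "(\<Sum>m<n. u m) = 0" "(\<Sum>m<n. (u m)\<^sup>2) = real n"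
    unfolding split by (simp_all add: u_def assms)
  moreover have "(\<Sum>m<n. q^m * u m) = (1 - q^p) * (\<Sum>m<p. q^m)"
  proof -
    have "(\<Sum>m<p. q^(m + p) * u (m + p)) = - (q^p * (\<Sum>m<p. q^m))"
      by (simp add: u_def power_add sum_distrib_left sum_negf mult.commute)
    then show ?thesis
      unfolding split by (simp add: u_def left_diff_distrib)
  qed
  ultimately have "((1 - q^p) * (\<Sum>m<p. q^m))\<^sup>2 \<le> sum_sq_dev {1..n} (\<lambda>j. q^(n-j)) * real n"
    using sum_sq_dev_geometric_test[where n=n and u=u and q=q] by simp
  moreover have "(1 - q^p)^4 = ((1 - q^p) * (\<Sum>m<p. q^m))\<^sup>2 * (1 - q)\<^sup>2"
  proof -
    have "((1 - q^p) * (\<Sum>m<p. q^m))\<^sup>2 * (1 - q)\<^sup>2 = (1 - q^p)\<^sup>2 * ((1 - q) * (\<Sum>m<p. q^m))\<^sup>2"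
      by (simp only: power_mult_distrib mult_ac)
    also have "\<dots> = (1 - q^p)^4"
      unfolding one_diff_power_eq[of q p, symmetric] by (simp flip: power_add)
    finally show ?thesis by simp
  qed
  ultimately have "(1 - q^p)^4 \<le> sum_sq_dev {1..n} (\<lambda>j. q^(n-j)) * real n * (1 - q)\<^sup>2"
    by (simp add: mult_right_mono)
  then show ?thesis
    by (simp add: mult_ac)
qed

section \<open>The lower bound\<close>

lemma one_minus_power_mult_le_one:
  fixes u :: real
  assumes "0 \<le> u" "u \<le> 1"
  shows "(1 - u)^m * (1 + real m * u) \<le> 1"
proof -
  have "(1 - u)^m * (1 + real m * u) \<le> (1 - u)^m * (1 + u)^m"
    using Bernoulli_inequality[of u m] assms by (intro mult_left_mono) auto
  also have "\<dots> = (1 - u\<^sup>2)^m"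
    by (simp add: power_mult_distrib[symmetric] power2_eq_square algebra_simps)
  also have "\<dots> \<le> 1"
    using assms by (intro power_le_one) (auto simp: power_le_one)
  finally show ?thesis .
qed

lemma one_minus_power_ge_half_min:
  fixes u :: real
  assumes "0 \<le> u" "u \<le> 1"
  shows "min 1 (real m * u) / 2 \<le> 1 - (1 - u)^m"
proof -
  define x where "x = real m * u"
  have x: "x \<ge> 0" using assms by (simp add: x_def)
  have "(1 - u)^m \<le> 1 / (1 + x)"
    using one_minus_power_mult_le_one[OF assms, of m] x by (simp add: x_def field_simps)
  moreover have "min 1 x / 2 \<le> 1 - 1 / (1 + x)"
    using x mult_left_le_one_le[of x x] by (simp add: field_simps min_def)
  ultimately show ?thesis
    unfolding x_def by linarith
qed

lemma sum_power_one_minus_ge: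
  fixes u :: real
  assumes "0 < u" "u \<le> 1" "m > 0"
  shows "real k / (1 + real m * u * real k) \<le> (\<Sum>t<k. ((1 - u)^m)^t)"
proof -
  define r where "r = (1 - u)^m"
  define S where "S = (\<Sum>t<k. r^t)"
  have S: "S \<ge> 0" using assms by (simp add: S_def r_def sum_nonneg)
  have pos: "1 + real m * u * real k > 0" using assms by (simp add: add_pos_nonneg)
  have "r^k * (1 + real (m * k) * u) \<le> 1"
    using one_minus_power_mult_le_one[of u "m * k"] assms by (simp add: r_def power_mult)
  then have "real m * u * real k / (1 + real m * u * real k) \<le> 1 - r^k"
    using pos by (simp add: field_simps)
  also have "1 - r^k = (1 - r) * S"
    by (simp add: S_def one_diff_power_eq)
  also have "\<dots> \<le> (real m * u) * S"
    using Bernoulli_inequality[of "-u" m] assms S by (intro mult_right_mono) (auto simp: r_def)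
  finally have "(real m * u) * (real k / (1 + real m * u * real k)) \<le> (real m * u) * S"
    by simp
  then show ?thesis
    unfolding S_def r_def by (rule mult_left_le_imp_le) (use assms in simp)
qed

lemma noise_term_ge:
  fixes p :: nat and u g D :: real
  assumes p: "p \<ge> 1" and u: "0 \<le> u" "u \<le> 1" and g: "g \<ge> 0"
    and noise: "(1 - (1 - u)^p)^4 \<le> real (2 * p) * u\<^sup>2 * D"
  shows "g * (min 1 (real p * u))^4 / (128 * real p) \<le> g / 4 * u\<^sup>2 * D"
proof -
  have "(min 1 (real p * u) / 2)^4 \<le> (1 - (1 - u)^p)^4"
    using one_minus_power_ge_half_min[OF u, of p] u by (intro power_mono) auto
  then have "(min 1 (real p * u))^4 \<le> 32 * (real p * u\<^sup>2 * D)"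
    using noise by (simp add: power_divide)
  then have "g * (min 1 (real p * u))^4 \<le> g * (32 * (real p * u\<^sup>2 * D))"
    using g by (rule mult_left_mono)
  then show ?thesis
    using p by (simp add: field_simps)
qed

lemma noise_lower_bound_long_horizon:
  fixes p k :: nat and u g D :: real
  assumes p: "p \<ge> 1" and u: "0 < u" "u < 1" and horizon: "8 * (real p * u) * real k > 1"
    and g: "g \<ge> 0" and noise: "(1 - (1 - u)^p)^4 \<le> real (2 * p) * u\<^sup>2 * D"
  shows "g / (2^20 * real p * real k^3) \<le> g / 4 * u\<^sup>2 * D * (\<Sum>t<k. ((1 - u)^(4 * p))^t)"
proof -
  define x where "x = real p * u"
  define S where "S = (\<Sum>t<k. ((1 - u)^(4 * p))^t)"
  have x: "x > 0" using p u by (simp add: x_def)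
  have k: "k \<ge> 1" using horizon by (cases k) auto
  have S: "S \<ge> 1"
    using member_le_sum[of 0 "{..<k}" "\<lambda>t. ((1 - u)^(4 * p))^t"] k
    by (simp add: S_def zero_le_even_power)
  have T: "g * (min 1 x)^4 / (128 * real p) \<le> g / 4 * u\<^sup>2 * D"
    unfolding x_def using noise_term_ge[OF p _ _ g noise] u by simp
  have "0 \<le> g * (min 1 x)^4 / (128 * real p)"
    using g x by simp
  with T have T0: "0 \<le> g / 4 * u\<^sup>2 * D"
    by linarith
  show ?thesis
  proof (cases "x \<ge> 1")
    case True
    have "128 * real p * 1 \<le> 2^20 * real p * real k^3"
      using k by (intro mult_mono) (auto simp: one_le_power)
    then have "g / (2^20 * real p * real k^3) \<le> g / (128 * real p)"
      using g p k by (intro divide_left_mono) auto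
    also have "\<dots> \<le> g / 4 * u\<^sup>2 * D"
      using T True by simp
    also have "\<dots> \<le> g / 4 * u\<^sup>2 * D * S"
      using T0 S by (simp add: mult_le_cancel_left1)
    finally show ?thesis unfolding S_def .
  next
    case False
    have "1 / (12 * x) \<le> real k / (1 + real (4 * p) * u * real k)"
      using horizon x by (simp add: x_def field_simps)
    also have "\<dots> \<le> S"
      unfolding S_def using sum_power_one_minus_ge[of u "4 * p" k] u p by simp
    finally have "g * x^4 / (128 * real p) * (1 / (12 * x)) \<le> g / 4 * u\<^sup>2 * D * S"
      using T T0 False x g p by (intro mult_mono) (auto simp: min_def)
    moreover have "g / (2^20 * real p * real k^3) \<le> g * x^4 / (128 * real p) * (1 / (12 * x))"
    proof -
      have "1 / 8 \<le> x * real k"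
        using horizon by (simp add: x_def)
      then have "(1 / 8)^3 \<le> (x * real k)^3"
        by (rule power_mono) simp
      then have "1 / (512 * real k^3) \<le> x^3"
        using k by (simp add: field_simps power_mult_distrib)
      then have "g / (2^20 * real p * real k^3) \<le> g * x^3 / (1536 * real p)"
        using g p k by (simp add: field_simps mult_left_mono)
      also have "\<dots> = g * x^4 / (128 * real p) * (1 / (12 * x))"
        using x by (simp add: field_simps power4_eq_xxxx power3_eq_cube)
      finally show ?thesis .
    qed
    ultimately show ?thesis unfolding S_def by linarith
  qed
qed

lemma rr_second_moment_lower_bound:
  fixes p k :: nat and u g D :: real
  assumes p: "p \<ge> 1" and k: "k \<ge> 1" and u: "u > 0" and g: "g \<ge> 4"
    and last_step: "u\<^sup>2 \<le> 2 * D" and halves: "(1 - (1 - u)^p)^4 \<le> real (2 * p) * u\<^sup>2 * D"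
  shows "min 1 (g / (real (2 * p) * real k^3)) / 2^19
    \<le> ((1 - u)^(4 * p))^k + g / 4 * u\<^sup>2 * D * (\<Sum>t<k. ((1 - u)^(4 * p))^t)"
proof -
  define r where "r = (1 - u)^(4 * p)"
  define S where "S = (\<Sum>t<k. r^t)"
  define T where "T = g / 4 * u\<^sup>2 * D"
  define M where "M = min 1 (g / (real (2 * p) * real k^3)) / 2^19"
  have r: "r \<ge> 0"
    by (simp add: r_def zero_le_even_power)
  have S: "S \<ge> 1"
    using member_le_sum[of 0 "{..<k}" "\<lambda>t. r^t"] k r by (simp add: S_def)
  have D: "D \<ge> 0"
    using last_step by (smt (verit) zero_le_power2)
  have T: "0 \<le> T"
    using g D by (simp add: T_def)
  then have rk: "r^k \<ge> 0" "T * S \<ge> 0" "T \<le> T * S"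
    using r S by (simp_all add: mult_le_cancel_left1)
  have M: "M \<le> 1 / 2" "M \<le> g / (2^20 * real p * real k^3)"
    by (simp_all add: M_def min_le_iff_disj)
  \<comment> \<open>large step; too few epochs for \<open>r\<^sup>k\<close> to drop below \<open>1/2\<close>; accumulated noise\<close>
  consider "u \<ge> 1" | "u < 1" "8 * (real p * u) * real k \<le> 1" | "u < 1" "8 * (real p * u) * real k > 1"
    by linarith
  then have "M \<le> r^k + T * S"
  proof cases
    case 1
    then have "1 \<le> u\<^sup>2"
      by (simp add: one_le_power)
    then have "1 * 1 \<le> g / 4 * u\<^sup>2"
      using g by (intro mult_mono) auto
    then have "1 * 1 * (1 / 2) \<le> T"
      unfolding T_def by (rule mult_mono) (use last_step \<open>1 \<le> u\<^sup>2\<close> g in auto)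
    then show ?thesis
      using M T rk by linarith
  next
    case 2
    have "1 - real (4 * p * k) * u \<le> r^k"
      using Bernoulli_inequality[of "-u" "4 * p * k"] 2 by (simp add: r_def power_mult)
    moreover have "real (4 * p * k) * u = 4 * (real p * u) * real k"
      by simp
    ultimately show ?thesis
      using 2 M rk by linarith
  next
    case 3
    then have "g / (2^20 * real p * real k^3) \<le> T * S"
      using noise_lower_bound_long_horizon[OF p u 3(1) 3(2) _ halves] g
      by (simp add: T_def S_def r_def)
    then show ?thesis
      using M rk by linarith
  qed
  then show ?thesis
    unfolding M_def r_def T_def S_def .
qed

lemma second_moment_rr_alternating_instance:
  assumes "n = 2 * p" "p \<ge> 1"
  shows "measure_pmf.expectation (rr_iter (alternating_instance lam G) n \<eta> 1 k) (\<lambda>x. x\<^sup>2)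
    = ((1 - \<eta> * lam)^(4 * p))^k + \<eta>\<^sup>2 * G\<^sup>2 / 4
      * (real n / (real n - 1) * sum_sq_dev {1..n} (\<lambda>j. (1 - \<eta> * lam)^(n-j)))
      * (\<Sum>t<k. ((1 - \<eta> * lam)^(4 * p))^t)"
proof -
  have n: "even n" "n \<ge> 2"
    using assms by simp_all
  have "((1 - \<eta> * lam)^n)\<^sup>2 = (1 - \<eta> * lam)^(4 * p)"
    unfolding assms(1) power_mult[symmetric] by (simp add: mult.commute)
  then show ?thesis
    using expectation_rr_iter_square[OF expectation_rr_epoch_square_alternating_instance[OF n,
        where lam=lam and G=G and \<eta>=\<eta>], where z=1 and k=k]
    by (simp add: mult_ac)
qed

lemma second_moment_rr_alternating_instance_ge:
  assumes n: "even n" "n \<ge> 2" and k: "k \<ge> 1" and lam: "lam > 0" "G \<ge> 2 * lam" and \<eta>: "\<eta> > 0"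
  shows "min 1 (G\<^sup>2 / (lam\<^sup>2 * real n * real k^3)) / 2^19
    \<le> measure_pmf.expectation (rr_iter (alternating_instance lam G) n \<eta> 1 k) (\<lambda>x. x\<^sup>2)"
proof -
  obtain p where p: "n = 2 * p" "p \<ge> 1"
    using n by (auto elim!: evenE)
  define u where "u = \<eta> * lam"
  define g where "g = G\<^sup>2 / lam\<^sup>2"
  define D where "D = sum_sq_dev {1..n} (\<lambda>j. (1 - u)^(n-j))"
  define S where "S = (\<Sum>t<k. ((1 - u)^(4 * p))^t)"
  have u: "u > 0"
    using \<eta> lam by (simp add: u_def)
  have g: "g \<ge> 4"
  proof -
    have "(2 * lam)\<^sup>2 \<le> G\<^sup>2"
      using lam by (intro power_mono) auto
    then show ?thesis
      using lam by (simp add: g_def field_simps)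
  qed
  have noise: "\<eta>\<^sup>2 * G\<^sup>2 / 4 = g / 4 * u\<^sup>2"
    using lam by (simp add: g_def u_def field_simps)
  have closed: "measure_pmf.expectation (rr_iter (alternating_instance lam G) n \<eta> 1 k) (\<lambda>x. x\<^sup>2)
      = ((1 - u)^(4 * p))^k + g / 4 * u\<^sup>2 * (real n / (real n - 1) * D) * S"
    using second_moment_rr_alternating_instance[OF p, of lam G \<eta> k]
    unfolding u_def[symmetric] D_def[symmetric] S_def[symmetric] noise .
  have compare: "g / 4 * u\<^sup>2 * D * S \<le> g / 4 * u\<^sup>2 * (real n / (real n - 1) * D) * S"
  proof -
    have "1 \<le> real n / (real n - 1)"
      using n by (simp add: field_simps)
    moreover have "0 \<le> D"
      by (simp add: D_def sum_sq_dev_nonneg)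
    ultimately have "1 * D \<le> real n / (real n - 1) * D"
      by (rule mult_right_mono)
    moreover have "0 \<le> g / 4 * u\<^sup>2" "0 \<le> S"
      using g by (simp_all add: S_def sum_nonneg zero_le_even_power)
    ultimately show ?thesis
      by (intro mult_right_mono mult_left_mono) auto
  qed
  have bound: "min 1 (g / (real (2 * p) * real k^3)) / 2^19 \<le> ((1 - u)^(4 * p))^k + g / 4 * u\<^sup>2 * D * S"
    unfolding S_def
  proof (rule rr_second_moment_lower_bound[OF p(2) k u g])
    show "u\<^sup>2 \<le> 2 * D"
      using sum_sq_dev_geometric_ge_last_step[OF n(2), of "1 - u"] by (simp add: D_def)
    show "(1 - (1 - u)^p)^4 \<le> real (2 * p) * u\<^sup>2 * D"
      using sum_sq_dev_geometric_ge_halves[OF p(1), of "1 - u"] by (simp add: D_def p(1))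
  qed
  have "min 1 (G\<^sup>2 / (lam\<^sup>2 * real n * real k^3)) / 2^19 = min 1 (g / (real (2 * p) * real k^3)) / 2^19"
    by (simp add: g_def p(1))
  also have "\<dots> \<le> ((1 - u)^(4 * p))^k + g / 4 * u\<^sup>2 * (real n / (real n - 1) * D) * S"
    using bound compare by linarith
  finally show ?thesis
    unfolding closed .
qed

lemma expected_suboptimality_rr_alternating_instance_ge:
  assumes "even n" "n \<ge> 2" "k \<ge> 1" "lam > 0" "G \<ge> 2 * lam" "\<eta> > 0"
  shows "1 / 2^20 * min lam (G\<^sup>2 / (lam * real n * real k^3))
    \<le> measure_pmf.expectation (rr_iter (alternating_instance lam G) n \<eta> 1 k)
         (\<lambda>x. avgF n (alternating_instance lam G) x - (INF y. avgF n (alternating_instance lam G) y))"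
proof -
  have F: "avgF n (alternating_instance lam G) = (\<lambda>x. lam / 2 * x\<^sup>2)"
    using assms by (simp add: avgF_alternating_instance)
  have "1 / 2^20 * min lam (G\<^sup>2 / (lam * real n * real k^3))
      = lam / 2 * (min 1 (G\<^sup>2 / (lam\<^sup>2 * real n * real k^3)) / 2^19)"
    using assms by (simp add: min_mult_distrib_left power2_eq_square field_simps)
  also have "\<dots> \<le> lam / 2 * measure_pmf.expectation (rr_iter (alternating_instance lam G) n \<eta> 1 k) (\<lambda>x. x\<^sup>2)"
    using second_moment_rr_alternating_instance_ge[OF assms] assms by (intro mult_left_mono) auto
  also have "\<dots> = measure_pmf.expectation (rr_iter (alternating_instance lam G) n \<eta> 1 k)
         (\<lambda>x. avgF n (alternating_instance lam G) x - (INF y. avgF n (alternating_instance lam G) y))"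
    unfolding F minimizer_half_square(2)[OF assms(4)] by simp
  finally show ?thesis .
qed

theorem proposition1:
  shows "\<exists>c::real. c > 0 \<and>
    (\<forall>(n::nat) (k::nat) (G::real) (lam::real).
       even n \<and> n \<ge> 2 \<and> k \<ge> 1 \<and> G > 0 \<and> lam > 0 \<and> G \<ge> 2 * lam \<longrightarrow>
       (\<exists>(f::nat \<Rightarrow> real \<Rightarrow> real) (x0::real). assumptionA n lam G f x0 \<and>
          (\<forall>\<eta>::real. \<eta> > 0 \<longrightarrow>
             measure_pmf.expectation (rr_iter f n \<eta> x0 k)
               (\<lambda>x. avgF n f x - (INF y. avgF n f y))
             \<ge> c * min lam (G^2 / (lam * real n * real k ^ 3)))))"
proof (intro exI[of _ "1 / 2^20"] conjI allI impI)
  fix n k :: nat and G lam :: real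
  assume "even n \<and> n \<ge> 2 \<and> k \<ge> 1 \<and> G > 0 \<and> lam > 0 \<and> G \<ge> 2 * lam"
  then show "\<exists>f x0. assumptionA n lam G f x0 \<and>
          (\<forall>\<eta>>0. measure_pmf.expectation (rr_iter f n \<eta> x0 k) (\<lambda>x. avgF n f x - (INF y. avgF n f y))
             \<ge> 1 / 2^20 * min lam (G^2 / (lam * real n * real k ^ 3)))"
    using assumptionA_alternating_instance expected_suboptimality_rr_alternating_instance_ge
    by (intro exI[of _ "alternating_instance lam G"] exI[of _ 1]) simp
qed simp

end
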